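(* Let $s,k,g,l$ be indices with $k\ge1$, $1\le l\le k-1$, $r_l\ge r_s$, $0\le g\le n-1$. (a) If there is a job $j<k$ with $r_s\le r_j<r_l$ and $C^{\mathrm{edf}}_{s,j}>r_l$, then $P_{s,k,g,l}=+\infty$. (b) $P_{s,k,g,l}=0$ if and only if $U_{s,k-1,g}\ge r_l$ and every job $j<k$ with $r_s\le r_j<r_l$ satisfies $C^{\mathrm{edf}}_{s,j}\le r_l$.
   Context: Time is discrete (slots $[t,t+1)$). There are $n$ jobs, job $j$ with integer processing time $p_j\ge1$, release time $r_j$, deadline $d_j$; jobs are indexed so that $d_1<\dots<d_n$, release times are pairwise distinct, and the instance is feasible. A (partial, preemptive) schedule assigns to each slot at most one job so that each job it schedules receives exactly $p_j$ slots in $[r_j,d_j)$, with the earliest-deadline property (whenever busy at slot $t$, run the released, not yet completed scheduled job of smallest deadline). $C_{\max}(S)$ is its completion time. For $s\in\{1,\dots,n\}$, $k\in\{0,\dots,n\}$, an $(s,k)$-schedule is a schedule $S$ with $C_{\max}(S)\le d_k$ scheduling exactly the jobs $j\le k$ with $r_s\le r_j<C_{\max}(S)$; the empty schedule counts, with $C_{\max}=r_s$. Gaps of an $(s,k)$-schedule: maximal idle intervals between its blocks (maximal busy intervals), plus the idle interval from $r_s$ to the first block if nonempty; for $t\ge C_{\max}(S)$, the gaps of $S$ with respect to $[r_s,t)$ are its gaps together with $[C_{\max}(S),t)$ if $C_{\max}(S)<t$. $U_{s,k,g}$ is the maximum completion time of an $(s,k)$-schedule with at most $g$ gaps. For $p\ge0$,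 an $(s,k,p)$-schedule is an $(s,k)$-schedule for the modified instance with $r_k$ replaced by $\max\{r_s,r_k\}$ and $p_k$ by $p$. $\mathrm{prevr}_{k'}(t)=\max\{r_j: j\le k',\ r_j<t\}$ ($-\infty$ if no such $j$). $P_{s,k,g,l}$ is the minimum integer $p\ge0$ for which there is an $(s,k,p)$-schedule $S$ with $\mathrm{prevr}_{k-1}(r_l)<C_{\max}(S)\le r_l$ having at most $g$ gaps with respect to $[r_s,r_l)$, and $+\infty$ if none exists. For $r_j\ge r_s$, $C^{\mathrm{edf}}_{s,j}$ is the minimum completion time of job $j$ over all $(s,j)$-schedules that schedule $j$. *)

theory Defs
  imports Main "HOL-Library.Extended_Real" "HOL-Library.Extended_Nat"
begin

text \<open>Jobs are 1..n; time slots are natural numbers; slot t is the interval [t,t+1).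
  A schedule is a pair (J, sigma): J is the set of scheduled jobs and
  sigma t = Some j means job j runs in slot t (None = idle).\<close>

definition is_sched ::
  "nat \<Rightarrow> (nat \<Rightarrow> nat) \<Rightarrow> (nat \<Rightarrow> nat) \<Rightarrow> (nat \<Rightarrow> nat) \<Rightarrow> nat set \<Rightarrow> (nat \<Rightarrow> nat option) \<Rightarrow> bool" where
  "is_sched n p r d J \<sigma> \<longleftrightarrow>
     J \<subseteq> {1..n} \<and>
     (\<forall>t j. \<sigma> t = Some j \<longrightarrow> j \<in> J \<and> r j \<le> t \<and> t < d j) \<and>
     (\<forall>j\<in>J. card {t. \<sigma> t = Some j} = p j) \<and>
     (\<forall>t j. \<sigma> t = Some j \<longrightarrow>
        (\<forall>i\<in>J. r i \<le> t \<and> card {u. u < t \<and> \<sigma> u = Some i} < p i \<longrightarrow> d j \<le> d i))"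

text \<open>Completion time; the empty schedule has completion time r s.\<close>
definition Cmax :: "(nat \<Rightarrow> nat) \<Rightarrow> nat \<Rightarrow> (nat \<Rightarrow> nat option) \<Rightarrow> nat" where
  "Cmax r s \<sigma> = max (r s) (Sup {Suc t | t. \<sigma> t \<noteq> None})"

definition sk_sched ::
  "nat \<Rightarrow> (nat \<Rightarrow> nat) \<Rightarrow> (nat \<Rightarrow> nat) \<Rightarrow> (nat \<Rightarrow> nat) \<Rightarrow> nat \<Rightarrow> nat \<Rightarrow> nat set \<Rightarrow> (nat \<Rightarrow> nat option) \<Rightarrow> bool" where
  "sk_sched n p r d s k J \<sigma> \<longleftrightarrow>
     is_sched n p r d J \<sigma> \<and> Cmax r s \<sigma> \<le> d k \<and>
     J = {j. 1 \<le> j \<and> j \<le> k \<and> r s \<le> r j \<and> r j < Cmax r s \<sigma>}"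

text \<open>Number of maximal idle intervals contained in [a,b).\<close>
definition ngaps :: "(nat \<Rightarrow> nat option) \<Rightarrow> nat \<Rightarrow> nat \<Rightarrow> nat" where
  "ngaps \<sigma> a b = card {u. a \<le> u \<and> u < b \<and> \<sigma> u = None \<and> (u = a \<or> \<sigma> (u - 1) \<noteq> None)}"

text \<open>U_{s,k,g}; Sup of the empty set is -infinity.\<close>
definition U :: "nat \<Rightarrow> (nat \<Rightarrow> nat) \<Rightarrow> (nat \<Rightarrow> nat) \<Rightarrow> (nat \<Rightarrow> nat) \<Rightarrow> nat \<Rightarrow> nat \<Rightarrow> nat \<Rightarrow> ereal" where
  "U n p r d s k g = Sup {ereal (real (Cmax r s \<sigma>)) | J \<sigma>.
       sk_sched n p r d s k J \<sigma> \<and> ngaps \<sigma> (r s) (Cmax r s \<sigma>) \<le> g}"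

definition skp_sched ::
  "nat \<Rightarrow> (nat \<Rightarrow> nat) \<Rightarrow> (nat \<Rightarrow> nat) \<Rightarrow> (nat \<Rightarrow> nat) \<Rightarrow> nat \<Rightarrow> nat \<Rightarrow> nat \<Rightarrow> nat set \<Rightarrow> (nat \<Rightarrow> nat option) \<Rightarrow> bool" where
  "skp_sched n p r d s k q J \<sigma> \<longleftrightarrow>
     sk_sched n (p(k := q)) (r(k := max (r s) (r k))) d s k J \<sigma>"

text \<open>prevr_{k'}(t); Sup of the empty set is -infinity.\<close>
definition prevr :: "(nat \<Rightarrow> nat) \<Rightarrow> nat \<Rightarrow> nat \<Rightarrow> ereal" where
  "prevr r k' t = Sup {ereal (real (r j)) | j. 1 \<le> j \<and> j \<le> k' \<and> r j < t}"

text \<open>P_{s,k,g,l}; Inf of the empty set of enat is infinity.\<close>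
definition P :: "nat \<Rightarrow> (nat \<Rightarrow> nat) \<Rightarrow> (nat \<Rightarrow> nat) \<Rightarrow> (nat \<Rightarrow> nat) \<Rightarrow> nat \<Rightarrow> nat \<Rightarrow> nat \<Rightarrow> nat \<Rightarrow> enat" where
  "P n p r d s k g l = Inf {enat q | q. \<exists>J \<sigma>.
       skp_sched n p r d s k q J \<sigma> \<and>
       prevr r (k - 1) (r l) < ereal (real (Cmax (r(k := max (r s) (r k))) s \<sigma>)) \<and>
       Cmax (r(k := max (r s) (r k))) s \<sigma> \<le> r l \<and>
       ngaps \<sigma> ((r(k := max (r s) (r k))) s) (r l) \<le> g}"

text \<open>C^edf_{s,j}: minimum completion time of job j over (s,j)-schedules scheduling j
  (infinity if there is none).\<close>
definition Cedf :: "nat \<Rightarrow> (nat \<Rightarrow> nat) \<Rightarrow> (nat \<Rightarrow> nat) \<Rightarrow> (nat \<Rightarrow> nat) \<Rightarrow> nat \<Rightarrow> nat \<Rightarrow> enat" where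
  "Cedf n p r d s j = Inf {enat (Suc (Max {t. \<sigma> t = Some j})) | J \<sigma>.
       sk_sched n p r d s j J \<sigma> \<and> j \<in> J}"

definition feasible :: "nat \<Rightarrow> (nat \<Rightarrow> nat) \<Rightarrow> (nat \<Rightarrow> nat) \<Rightarrow> (nat \<Rightarrow> nat) \<Rightarrow> bool" where
  "feasible n p r d \<longleftrightarrow> (\<exists>\<sigma> :: nat \<Rightarrow> nat option.
     (\<forall>t j. \<sigma> t = Some j \<longrightarrow> j \<in> {1..n} \<and> r j \<le> t \<and> t < d j) \<and>
     (\<forall>j\<in>{1..n}. card {t. \<sigma> t = Some j} = p j))"

end

theory Submission
  imports Defs
begin


definition is_assignment ::
  "(nat \<Rightarrow> nat) \<Rightarrow> (nat \<Rightarrow> nat) \<Rightarrow> (nat \<Rightarrow> nat) \<Rightarrow> nat set \<Rightarrow> (nat \<Rightarrow> nat option) \<Rightarrow> bool" where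
  "is_assignment p r d X \<sigma> \<longleftrightarrow>
     (\<forall>t j. \<sigma> t = Some j \<longrightarrow> j \<in> X \<and> r j \<le> t \<and> t < d j) \<and>
     (\<forall>j\<in>X. card {t. \<sigma> t = Some j} = p j)"

definition slots_of :: "(nat \<Rightarrow> nat option) \<Rightarrow> nat set \<Rightarrow> nat set" where
  "slots_of \<sigma> X = {t. \<exists>i\<in>X. \<sigma> t = Some i}"

definition restrict_jobs :: "(nat \<Rightarrow> nat option) \<Rightarrow> nat set \<Rightarrow> nat \<Rightarrow> nat option" where
  "restrict_jobs \<sigma> X t = (case \<sigma> t of Some i \<Rightarrow> if i \<in> X then Some i else None | None \<Rightarrow> None)"

lemma is_assignmentD:
  "is_assignment p r d X \<sigma> \<Longrightarrow> \<sigma> t = Some j \<Longrightarrow> j \<in> X \<and> r j \<le> t \<and> t < d j"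
  by (simp add: is_assignment_def)

lemma is_assignment_card:
  "is_assignment p r d X \<sigma> \<Longrightarrow> j \<in> X \<Longrightarrow> card {t. \<sigma> t = Some j} = p j"
  by (simp add: is_assignment_def)

lemma is_sched_imp_is_assignment: "is_sched n p r d J \<sigma> \<Longrightarrow> is_assignment p r d J \<sigma>"
  by (simp add: is_sched_def is_assignment_def)

lemma is_sched_jobs: "is_sched n p r d J \<sigma> \<Longrightarrow> J \<subseteq> {1..n}"
  by (simp add: is_sched_def)

lemma is_sched_edf:
  "is_sched n p r d J \<sigma> \<Longrightarrow> \<sigma> t = Some j \<Longrightarrow> i \<in> J \<Longrightarrow> r i \<le> t \<Longrightarrow>
     card {u. u < t \<and> \<sigma> u = Some i} < p i \<Longrightarrow> d j \<le> d i"
  unfolding is_sched_def by blast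

lemma is_schedI:
  assumes "J \<subseteq> {1..n}" "is_assignment p r d J \<sigma>"
    "\<And>t j i. \<sigma> t = Some j \<Longrightarrow> i \<in> J \<Longrightarrow> r i \<le> t \<Longrightarrow>
       card {u. u < t \<and> \<sigma> u = Some i} < p i \<Longrightarrow> d j \<le> d i"
  shows "is_sched n p r d J \<sigma>"
  using assms unfolding is_sched_def is_assignment_def by blast

lemma finite_job_slots: "is_assignment p r d X \<sigma> \<Longrightarrow> finite {t. \<sigma> t = Some j}"
  by (rule finite_subset[of _ "{..<d j}"]) (auto dest: is_assignmentD)

lemma slots_of_eq_UN: "slots_of \<sigma> X = (\<Union>i\<in>X. {t. \<sigma> t = Some i})"
  by (auto simp: slots_of_def)

lemma finite_slots_of: "is_assignment p r d Y \<sigma> \<Longrightarrow> finite X \<Longrightarrow> finite (slots_of \<sigma> X)"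
  by (auto simp: slots_of_eq_UN intro: finite_job_slots)

lemma card_slots_of:
  assumes "is_assignment p r d Y \<sigma>" "finite X" "X \<subseteq> Y"
  shows "card (slots_of \<sigma> X) = sum p X"
proof -
  have "card (slots_of \<sigma> X) = (\<Sum>i\<in>X. card {t. \<sigma> t = Some i})"
    unfolding slots_of_eq_UN
    by (rule card_UN_disjoint) (use assms finite_job_slots in auto)
  also have "\<dots> = sum p X"
    using assms by (auto intro!: sum.cong simp: is_assignment_card)
  finally show ?thesis .
qed

lemma busy_eq_slots_of: "is_assignment p r d X \<sigma> \<Longrightarrow> {t. \<sigma> t \<noteq> None} = slots_of \<sigma> X"
  by (auto simp: slots_of_def dest: is_assignmentD)

lemma finite_busy: "is_assignment p r d X \<sigma> \<Longrightarrow> finite X \<Longrightarrow> finite {t. \<sigma> t \<noteq> None}"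
  by (metis busy_eq_slots_of finite_slots_of)

lemma ex_slot: "is_assignment p r d X \<sigma> \<Longrightarrow> j \<in> X \<Longrightarrow> 0 < p j \<Longrightarrow> \<exists>t. \<sigma> t = Some j"
  by (metis (mono_tags) Collect_empty_eq card.empty is_assignment_card less_irrefl)

lemma ex_slot_ge_if_pending:
  assumes "is_assignment p r d X \<sigma>" "i \<in> X" "card {u. u < t \<and> \<sigma> u = Some i} < p i"
  shows "\<exists>u\<ge>t. \<sigma> u = Some i"
proof (rule ccontr)
  assume "\<not> ?thesis"
  hence "{u. \<sigma> u = Some i} = {u. u < t \<and> \<sigma> u = Some i}" by (auto simp: not_le)
  thus False using assms is_assignment_card by fastforce
qed

lemma restrict_jobs_eq_Some: "restrict_jobs \<sigma> X t = Some i \<longleftrightarrow> \<sigma> t = Some i \<and> i \<in> X"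
  by (auto simp: restrict_jobs_def split: option.splits)

lemma is_assignment_restrict_jobs:
  assumes "is_assignment p r d Y \<sigma>" "X \<subseteq> Y"
  shows "is_assignment p r d X (restrict_jobs \<sigma> X)"
proof -
  have "{t. restrict_jobs \<sigma> X t = Some j} = {t. \<sigma> t = Some j}" if "j \<in> X" for j
    using that by (auto simp: restrict_jobs_eq_Some)
  thus ?thesis using assms
    by (auto simp: is_assignment_def restrict_jobs_eq_Some)
qed

lemma is_sched_restrict_jobs:
  assumes "is_sched n p r d J \<sigma>" "X \<subseteq> J"
  shows "is_sched n p r d X (restrict_jobs \<sigma> X)"
proof (rule is_schedI)
  show "X \<subseteq> {1..n}" using assms is_sched_jobs by blast
  show "is_assignment p r d X (restrict_jobs \<sigma> X)"
    using assms is_sched_imp_is_assignment is_assignment_restrict_jobs by blast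
next
  fix t j i assume "restrict_jobs \<sigma> X t = Some j" "i \<in> X" "r i \<le> t"
    "card {u. u < t \<and> restrict_jobs \<sigma> X u = Some i} < p i"
  moreover have "{u. u < t \<and> restrict_jobs \<sigma> X u = Some i} = {u. u < t \<and> \<sigma> u = Some i}"
    using \<open>i \<in> X\<close> by (auto simp: restrict_jobs_eq_Some)
  ultimately show "d j \<le> d i" using assms is_sched_edf by (auto simp: restrict_jobs_eq_Some)
qed

lemma is_sched_cong:
  assumes "is_sched n p' r' d J \<sigma>" "\<And>i. i \<in> J \<Longrightarrow> p' i = p i \<and> r' i = r i"
  shows "is_sched n p r d J \<sigma>"
  using assms unfolding is_sched_def by (metis (no_types, lifting))

lemma is_sched_zero_job_iff:
  assumes "k \<notin> J" "J' - {k} = J" "J' \<subseteq> {1..n}"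
  shows "is_sched n (p(k := 0)) (r(k := x)) d J' \<sigma> \<longleftrightarrow> is_sched n p r d J \<sigma>"
proof
  assume sch: "is_sched n (p(k := 0)) (r(k := x)) d J' \<sigma>"
  have asg: "is_assignment (p(k := 0)) (r(k := x)) d J' \<sigma>"
    using sch by (rule is_sched_imp_is_assignment)
  have no_k: "\<sigma> t \<noteq> Some k" for t
  proof
    assume k: "\<sigma> t = Some k"
    hence "card {t. \<sigma> t = Some k} = 0"
      using is_assignmentD[OF asg k] is_assignment_card[OF asg] by simp
    thus False using finite_job_slots[OF asg, of k] k by auto
  qed
  have J: "i \<in> J \<longleftrightarrow> i \<in> J' \<and> i \<noteq> k" for i using assms(2) by blast
  show "is_sched n p r d J \<sigma>"
  proof (rule is_schedI)
    show "J \<subseteq> {1..n}" using assms by blast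
    show "is_assignment p r d J \<sigma>"
      unfolding is_assignment_def
    proof (intro conjI allI impI ballI)
      fix t j assume sj: "\<sigma> t = Some j"
      have "j \<noteq> k" using no_k sj by blast
      with is_assignmentD[OF asg sj] J show "j \<in> J" "r j \<le> t" "t < d j" by auto
    next
      fix j assume "j \<in> J"
      hence "j \<in> J'" "j \<noteq> k" using J by auto
      thus "card {t. \<sigma> t = Some j} = p j" using is_assignment_card[OF asg, of j] by simp
    qed
  next
    fix t j i assume "\<sigma> t = Some j" "i \<in> J" "r i \<le> t" "card {u. u < t \<and> \<sigma> u = Some i} < p i"
    moreover have "i \<in> J'" "i \<noteq> k" using \<open>i \<in> J\<close> J by auto
    ultimately show "d j \<le> d i" using is_sched_edf[OF sch, of t j i] by simp
  qed
next
  assume sch: "is_sched n p r d J \<sigma>"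
  have asg: "is_assignment p r d J \<sigma>" using sch by (rule is_sched_imp_is_assignment)
  have no_k: "\<sigma> t \<noteq> Some k" for t using is_assignmentD[OF asg] assms(1) by blast
  have J: "i \<in> J' \<Longrightarrow> i \<noteq> k \<Longrightarrow> i \<in> J" "J \<subseteq> J'" for i using assms(2) by blast+
  show "is_sched n (p(k := 0)) (r(k := x)) d J' \<sigma>"
  proof (rule is_schedI)
    show "J' \<subseteq> {1..n}" by (rule assms(3))
    show "is_assignment (p(k := 0)) (r(k := x)) d J' \<sigma>"
      unfolding is_assignment_def
    proof (intro conjI allI impI ballI)
      fix t j assume sj: "\<sigma> t = Some j"
      have "j \<noteq> k" using no_k sj by blast
      with is_assignmentD[OF asg sj] J show "j \<in> J'" "(r(k := x)) j \<le> t" "t < d j" by auto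
    next
      fix j assume "j \<in> J'"
      show "card {t. \<sigma> t = Some j} = (p(k := 0)) j"
      proof (cases "j = k")
        case True thus ?thesis using no_k by simp
      next
        case False thus ?thesis using is_assignment_card[OF asg] J \<open>j \<in> J'\<close> by auto
      qed
    qed
  next
    fix t j i assume "\<sigma> t = Some j" "i \<in> J'" "(r(k := x)) i \<le> t"
      "card {u. u < t \<and> \<sigma> u = Some i} < (p(k := 0)) i"
    moreover have "i \<in> J" "i \<noteq> k" using calculation J by (auto split: if_splits)
    ultimately show "d j \<le> d i" using is_sched_edf[OF sch, of t j i] by simp
  qed
qed

lemma Cmax_ge_release: "r s \<le> Cmax r s \<sigma>"
  by (simp add: Cmax_def)

lemma Suc_le_Cmax:
  assumes "finite {t. \<sigma> t \<noteq> None}" "\<sigma> t \<noteq> None"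
  shows "Suc t \<le> Cmax r s \<sigma>"
proof -
  have "{Suc t |t. \<sigma> t \<noteq> None} = Suc ` {t. \<sigma> t \<noteq> None}" by auto
  hence "Suc t \<le> Sup {Suc t |t. \<sigma> t \<noteq> None}"
    using assms by (intro cSup_upper bdd_above_finite) auto
  thus ?thesis by (simp add: Cmax_def)
qed

lemma Cmax_le:
  assumes "r s \<le> M" "\<And>t. \<sigma> t \<noteq> None \<Longrightarrow> Suc t \<le> M"
  shows "Cmax r s \<sigma> \<le> M"
proof (cases "{Suc t |t. \<sigma> t \<noteq> None} = {}")
  case False
  hence "Sup {Suc t |t. \<sigma> t \<noteq> None} \<le> M" using assms(2) by (intro cSup_least) auto
  thus ?thesis using assms by (simp add: Cmax_def)
qed (use assms in \<open>simp add: Cmax_def\<close>)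

lemma Cmax_eqI:
  assumes "finite {t. \<sigma> t \<noteq> None}" "r s < C" "\<sigma> (C - 1) \<noteq> None" "\<And>t. \<sigma> t \<noteq> None \<Longrightarrow> t < C"
  shows "Cmax r s \<sigma> = C"
  using Suc_le_Cmax[OF assms(1,3), of r s] Cmax_le[of r s C \<sigma>] assms by fastforce

lemma Cmax_fun_upd_release: "Cmax (r(k := max (r s) (r k))) s \<sigma> = Cmax r s \<sigma>"
  by (cases "s = k") (simp_all add: Cmax_def)

text \<open>For \<open>D\<close> above all deadlines, moving a job into an earlier idle slot or swapping two jobs
  into earliest-deadline order strictly decreases this potential.\<close>
definition slot_weight :: "nat \<Rightarrow> (nat \<Rightarrow> nat) \<Rightarrow> (nat \<Rightarrow> nat option) \<Rightarrow> nat \<Rightarrow> nat" where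
  "slot_weight D d \<sigma> t = (case \<sigma> t of None \<Rightarrow> 0 | Some j \<Rightarrow> t * (D - d j))"

definition potential :: "nat \<Rightarrow> (nat \<Rightarrow> nat) \<Rightarrow> (nat \<Rightarrow> nat option) \<Rightarrow> nat" where
  "potential D d \<sigma> = (\<Sum>t<D. slot_weight D d \<sigma> t)"

lemma potential_fun_upd2:
  fixes \<sigma> :: "nat \<Rightarrow> nat option" and a b :: "nat option"
  assumes "t < D" "u < D" "t \<noteq> u"
  defines "\<sigma>' \<equiv> \<sigma>(t := a, u := b)"
  shows "potential D d \<sigma>' + slot_weight D d \<sigma> t + slot_weight D d \<sigma> u
       = potential D d \<sigma> + slot_weight D d \<sigma>' t + slot_weight D d \<sigma>' u"
proof -
  have split: "sum f {..<D} = f t + (f u + sum f ({..<D} - {t} - {u}))" for f :: "nat \<Rightarrow> nat"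
    using assms by (simp add: sum.remove[of _ t] sum.remove[of _ u])
  have "sum (slot_weight D d \<sigma>') ({..<D} - {t} - {u}) = sum (slot_weight D d \<sigma>) ({..<D} - {t} - {u})"
    by (rule sum.cong) (auto simp: slot_weight_def \<sigma>'_def)
  thus ?thesis unfolding potential_def split[of "slot_weight D d \<sigma>"] split[of "slot_weight D d \<sigma>'"]
    by simp
qed

lemma card_insert_Diff_singleton:
  assumes "finite A" "b \<in> A" "a \<notin> A"
  shows "card (insert a (A - {b})) = card A"
proof -
  have "card A > 0" using assms card_gt_0_iff by blast
  thus ?thesis using assms by (simp add: card_insert_disjoint card_Diff_singleton)
qed

lemma is_assignment_move:
  assumes asg: "is_assignment p r d X \<sigma>" and "\<sigma> u = Some i" "\<sigma> t = None" "t < u" "r i \<le> t"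
  shows "is_assignment p r d X (\<sigma>(t := Some i, u := None))"
proof -
  have "card {x. (\<sigma>(t := Some i, u := None)) x = Some a} = card {x. \<sigma> x = Some a}" for a
  proof (cases "a = i")
    case True
    hence "{x. (\<sigma>(t := Some i, u := None)) x = Some a} = insert t ({x. \<sigma> x = Some a} - {u})"
      using assms by auto
    thus ?thesis using True assms finite_job_slots[OF asg, of i]
      card_insert_Diff_singleton[of "{x. \<sigma> x = Some i}" u t] by auto
  next
    case False
    hence "{x. (\<sigma>(t := Some i, u := None)) x = Some a} = {x. \<sigma> x = Some a}"
      using assms by auto
    thus ?thesis by simp
  qed
  moreover have "t < d i" using is_assignmentD[OF asg \<open>\<sigma> u = Some i\<close>] assms by auto
  ultimately show ?thesis using assms is_assignmentD[OF asg]
    unfolding is_assignment_def by (auto simp: is_assignment_card)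
qed

lemma is_assignment_swap:
  assumes asg: "is_assignment p r d X \<sigma>"
    and "\<sigma> t = Some j" "\<sigma> u = Some i" "t < u" "r i \<le> t" "d i < d j"
  shows "is_assignment p r d X (\<sigma>(t := Some i, u := Some j))"
proof -
  have ij: "i \<noteq> j" using assms by auto
  have "card {x. (\<sigma>(t := Some i, u := Some j)) x = Some a} = card {x. \<sigma> x = Some a}" for a
  proof -
    consider "a = i" | "a = j" | "a \<noteq> i" "a \<noteq> j" by blast
    thus ?thesis
    proof cases
      case 1
      have "{x. (\<sigma>(t := Some i, u := Some j)) x = Some i} = insert t ({x. \<sigma> x = Some i} - {u})"
        using assms ij by auto
      thus ?thesis using 1 assms ij finite_job_slots[OF asg, of i]
        card_insert_Diff_singleton[of "{x. \<sigma> x = Some i}" u t] by auto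
    next
      case 2
      have "{x. (\<sigma>(t := Some i, u := Some j)) x = Some j} = insert u ({x. \<sigma> x = Some j} - {t})"
        using assms ij by auto
      thus ?thesis using 2 assms ij finite_job_slots[OF asg, of j]
        card_insert_Diff_singleton[of "{x. \<sigma> x = Some j}" t u] by auto
    next
      case 3
      hence "{x. (\<sigma>(t := Some i, u := Some j)) x = Some a} = {x. \<sigma> x = Some a}"
        using assms by auto
      thus ?thesis by simp
    qed
  qed
  moreover have "r j \<le> u" "t < d i" "u < d j"
    using is_assignmentD[OF asg \<open>\<sigma> t = Some j\<close>] is_assignmentD[OF asg \<open>\<sigma> u = Some i\<close>] assms
    by auto
  ultimately show ?thesis using assms is_assignmentD[OF asg]
    unfolding is_assignment_def by (auto simp: is_assignment_card)
qed

lemma potential_move_less: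
  assumes "\<sigma> u = Some i" "\<sigma> t = None" "t < u" "u < D" "d i < D"
  shows "potential D d (\<sigma>(t := Some i, u := None)) < potential D d \<sigma>"
proof -
  have "t * (D - d i) < u * (D - d i)" using assms by simp
  moreover have "potential D d (\<sigma>(t := Some i, u := None)) + u * (D - d i) =
      potential D d \<sigma> + t * (D - d i)"
    using potential_fun_upd2[where \<sigma>=\<sigma> and a="Some i" and b=None and t=t and u=u and D=D and d=d] assms
    by (simp add: slot_weight_def)
  ultimately show ?thesis by linarith
qed

lemma potential_swap_less:
  assumes "\<sigma> t = Some j" "\<sigma> u = Some i" "t < u" "u < D" "d i < d j" "d j \<le> D"
  shows "potential D d (\<sigma>(t := Some i, u := Some j)) < potential D d \<sigma>"
proof -
  have "t * (D - d i) + u * (D - d j) < t * (D - d j) + u * (D - d i)"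
  proof -
    have "t * (d j - d i) < u * (d j - d i)" using assms by simp
    moreover have "D - d i = (D - d j) + (d j - d i)" using assms by simp
    ultimately show ?thesis by (simp add: algebra_simps)
  qed
  thus ?thesis using potential_fun_upd2[where \<sigma>=\<sigma> and a="Some i" and b="Some j" and t=t and u=u and D=D and d=d] assms by (simp add: slot_weight_def)
qed

lemma ex_compact_edf_assignment:
  assumes asg: "is_assignment p r d X \<sigma>" and "finite X" and "\<forall>t. \<sigma> t \<noteq> None \<longrightarrow> t \<in> A"
  obtains \<pi> where "is_assignment p r d X \<pi>" "\<forall>t. \<pi> t \<noteq> None \<longrightarrow> t \<in> A"
    "\<And>t u i. t \<in> A \<Longrightarrow> \<pi> u = Some i \<Longrightarrow> r i \<le> t \<Longrightarrow> t < u \<Longrightarrow> \<pi> t \<noteq> None"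
    "\<And>t u i j. \<pi> t = Some j \<Longrightarrow> \<pi> u = Some i \<Longrightarrow> t < u \<Longrightarrow> r i \<le> t \<Longrightarrow> d j \<le> d i"
proof -
  define D where "D = Suc (Max (d ` X))"
  define S where "S \<pi> \<longleftrightarrow> is_assignment p r d X \<pi> \<and> (\<forall>t. \<pi> t \<noteq> None \<longrightarrow> t \<in> A)" for \<pi>
  obtain \<pi> where S\<pi>: "S \<pi>" and min: "\<And>\<pi>'. S \<pi>' \<Longrightarrow> potential D d \<pi> \<le> potential D d \<pi>'"
    using ex_has_least_nat[of S \<sigma> "potential D d"] assms unfolding S_def by blast
  have asg\<pi>: "is_assignment p r d X \<pi>" using S\<pi> by (simp add: S_def)
  have bound: "u < D" "d i < D" if "\<pi> u = Some i" for u i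
  proof -
    have "i \<in> X" "u < d i" using is_assignmentD[OF asg\<pi> that] by auto
    moreover from this have "d i \<le> Max (d ` X)" using \<open>finite X\<close> by simp
    ultimately show "u < D" "d i < D" by (auto simp: D_def)
  qed
  show thesis
  proof (rule that)
    show "is_assignment p r d X \<pi>" "\<forall>t. \<pi> t \<noteq> None \<longrightarrow> t \<in> A" using S\<pi> by (auto simp: S_def)
  next
    fix t u i assume "t \<in> A" "\<pi> u = Some i" "r i \<le> t" "t < u"
    show "\<pi> t \<noteq> None"
    proof
      assume "\<pi> t = None"
      hence "S (\<pi>(t := Some i, u := None))"
        using S\<pi> \<open>t \<in> A\<close> is_assignment_move[OF asg\<pi> \<open>\<pi> u = Some i\<close> _ \<open>t < u\<close> \<open>r i \<le> t\<close>]
        by (auto simp: S_def)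
      moreover have "potential D d (\<pi>(t := Some i, u := None)) < potential D d \<pi>"
        using potential_move_less \<open>\<pi> t = None\<close> \<open>\<pi> u = Some i\<close> \<open>t < u\<close> bound by blast
      ultimately show False using min by fastforce
    qed
  next
    fix t u i j assume "\<pi> t = Some j" "\<pi> u = Some i" "t < u" "r i \<le> t"
    show "d j \<le> d i"
    proof (rule ccontr)
      assume "\<not> d j \<le> d i"
      moreover have "t \<in> A" "u \<in> A"
        using S\<pi> \<open>\<pi> t = Some j\<close> \<open>\<pi> u = Some i\<close> by (auto simp: S_def)
      ultimately have "S (\<pi>(t := Some i, u := Some j))"
        using S\<pi> is_assignment_swap[OF asg\<pi> \<open>\<pi> t = Some j\<close> \<open>\<pi> u = Some i\<close> \<open>t < u\<close> \<open>r i \<le> t\<close>]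
        by (auto simp: S_def)
      moreover have "potential D d (\<pi>(t := Some i, u := Some j)) < potential D d \<pi>"
        using potential_swap_less \<open>\<pi> t = Some j\<close> \<open>\<pi> u = Some i\<close> \<open>t < u\<close> \<open>\<not> d j \<le> d i\<close>
          bound[of t j] bound[of u i] by simp
      ultimately show False using min by fastforce
    qed
  qed
qed

lemma is_sched_if_exchange_edf:
  assumes "J \<subseteq> {1..n}" "is_assignment p r d J \<sigma>"
    "\<And>t u i j. \<sigma> t = Some j \<Longrightarrow> \<sigma> u = Some i \<Longrightarrow> t < u \<Longrightarrow> r i \<le> t \<Longrightarrow> d j \<le> d i"
  shows "is_sched n p r d J \<sigma>"
proof (rule is_schedI[OF assms(1,2)])
  fix t j i assume "\<sigma> t = Some j" "i \<in> J" "r i \<le> t" "card {u. u < t \<and> \<sigma> u = Some i} < p i"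
  moreover from this obtain u where "t \<le> u" "\<sigma> u = Some i"
    using ex_slot_ge_if_pending[OF assms(2)] by blast
  ultimately show "d j \<le> d i" using assms(3) by (cases "t = u") auto
qed

lemma is_sched_splice:
  assumes sch1: "is_sched n p r d J1 \<sigma>1" and sch2: "is_sched n p r d J2 \<sigma>2"
    and "\<And>t. \<sigma>1 t \<noteq> None \<Longrightarrow> t < T" "\<forall>i\<in>J1. r i < T" "\<forall>i\<in>J2. T \<le> r i"
  shows "is_sched n p r d (J1 \<union> J2) (\<lambda>t. if t < T then \<sigma>1 t else \<sigma>2 t)"
proof -
  define \<rho> where "\<rho> = (\<lambda>t. if t < T then \<sigma>1 t else \<sigma>2 t)"
  have asg1: "is_assignment p r d J1 \<sigma>1" and asg2: "is_assignment p r d J2 \<sigma>2"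
    using sch1 sch2 by (auto intro: is_sched_imp_is_assignment)
  have slot1: "\<rho> t = Some i \<longleftrightarrow> \<sigma>1 t = Some i" if "i \<in> J1" for t i
    using that assms(3-5) is_assignmentD[OF asg2, of t i] by (force simp: \<rho>_def)
  have slot2: "\<rho> t = Some i \<longleftrightarrow> \<sigma>2 t = Some i" if "i \<in> J2" for t i
    using that assms(4,5) is_assignmentD[OF asg1, of t i] is_assignmentD[OF asg2, of t i]
    by (force simp: \<rho>_def)
  have in1: "i \<in> J1" if "\<rho> t = Some i" "t < T" for t i
    using that is_assignmentD[OF asg1] by (auto simp: \<rho>_def)
  have in2: "i \<in> J2" if "\<rho> t = Some i" "\<not> t < T" for t i
    using that is_assignmentD[OF asg2] by (auto simp: \<rho>_def)
  show ?thesis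
    unfolding \<rho>_def[symmetric]
  proof (rule is_schedI)
    show "J1 \<union> J2 \<subseteq> {1..n}" using sch1 sch2 is_sched_jobs by blast
    show "is_assignment p r d (J1 \<union> J2) \<rho>"
      unfolding is_assignment_def
    proof (intro conjI allI impI ballI)
      fix t i assume "\<rho> t = Some i"
      thus "i \<in> J1 \<union> J2" "r i \<le> t" "t < d i"
        using in1 in2 slot1 slot2 is_assignmentD[OF asg1] is_assignmentD[OF asg2] by blast+
    next
      fix i assume "i \<in> J1 \<union> J2"
      thus "card {t. \<rho> t = Some i} = p i"
        using slot1 slot2 is_assignment_card[OF asg1] is_assignment_card[OF asg2] by auto
    qed
  next
    fix t j i assume \<rho>t: "\<rho> t = Some j" and i: "i \<in> J1 \<union> J2" "r i \<le> t"
      and pending: "card {u. u < t \<and> \<rho> u = Some i} < p i"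
    show "d j \<le> d i"
    proof (cases "i \<in> J1")
      case True
      have "{u. u < t \<and> \<rho> u = Some i} = {u. u < t \<and> \<sigma>1 u = Some i}" using slot1[OF True] by blast
      moreover have "t < T"
      proof (rule ccontr)
        assume "\<not> t < T"
        hence "{u. u < t \<and> \<sigma>1 u = Some i} = {u. \<sigma>1 u = Some i}" using assms(3) by fastforce
        thus False using calculation pending is_assignment_card[OF asg1 True] by simp
      qed
      ultimately show ?thesis
        using is_sched_edf[OF sch1 _ True i(2)] \<rho>t pending by (simp add: \<rho>_def)
    next
      case False
      hence "i \<in> J2" using i by blast
      hence "\<not> t < T" using i assms(5) by fastforce
      moreover have "{u. u < t \<and> \<rho> u = Some i} = {u. u < t \<and> \<sigma>2 u = Some i}"
        using slot2[OF \<open>i \<in> J2\<close>] by blast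
      ultimately show ?thesis
        using is_sched_edf[OF sch2 _ \<open>i \<in> J2\<close> i(2)] \<rho>t pending by (simp add: \<rho>_def)
    qed
  qed
qed

lemma ngaps_le_if_agree_then_busy:
  assumes "\<And>t. t < \<theta> \<Longrightarrow> \<pi> t = None \<longleftrightarrow> \<sigma> t = None"
    "\<And>t. \<theta> \<le> t \<Longrightarrow> t < T \<Longrightarrow> \<pi> t \<noteq> None" "min \<theta> T \<le> T'"
  shows "ngaps \<pi> a T \<le> ngaps \<sigma> a T'"
  unfolding ngaps_def
proof (rule card_mono)
  show "finite {u. a \<le> u \<and> u < T' \<and> \<sigma> u = None \<and> (u = a \<or> \<sigma> (u - 1) \<noteq> None)}" by simp
next
  show "{u. a \<le> u \<and> u < T \<and> \<pi> u = None \<and> (u = a \<or> \<pi> (u - 1) \<noteq> None)}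
      \<subseteq> {u. a \<le> u \<and> u < T' \<and> \<sigma> u = None \<and> (u = a \<or> \<sigma> (u - 1) \<noteq> None)}"
  proof (intro subsetI CollectI, elim CollectE conjE)
    fix u assume "a \<le> u" "u < T" "\<pi> u = None" "u = a \<or> \<pi> (u - 1) \<noteq> None"
    moreover from this have "u < \<theta>" using assms(2) not_le by blast
    moreover from this have "u - 1 < \<theta>" by linarith
    ultimately show "a \<le> u \<and> u < T' \<and> \<sigma> u = None \<and> (u = a \<or> \<sigma> (u - 1) \<noteq> None)"
      using assms(1)[of u] assms(1)[of "u - 1"] assms(3) by auto
  qed
qed

lemma skp_sched_iff:
  "skp_sched n p r d s k q J \<sigma> \<longleftrightarrow>
     is_sched n (p(k := q)) (r(k := max (r s) (r k))) d J \<sigma> \<and> Cmax r s \<sigma> \<le> d k \<and>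
     J = {i. 1 \<le> i \<and> i \<le> k \<and> r s \<le> (r(k := max (r s) (r k))) i \<and>
            (r(k := max (r s) (r k))) i < Cmax r s \<sigma>}"
proof -
  have "(r(k := max (r s) (r k))) s = r s" by simp
  thus ?thesis unfolding skp_sched_def sk_sched_def Cmax_fun_upd_release by (simp only:)
qed

lemma finite_jobs_sched: "is_sched n p r d J \<sigma> \<Longrightarrow> finite J"
  by (metis finite_atLeastAtMost finite_subset is_sched_jobs)

lemma finite_busy_sched: "is_sched n p r d J \<sigma> \<Longrightarrow> finite {t. \<sigma> t \<noteq> None}"
  using finite_busy[OF is_sched_imp_is_assignment] finite_jobs_sched by blast

lemma skp_sched_zero_iff:
  assumes "k \<le> n"
  shows "(\<exists>J. skp_sched n p r d s k 0 J \<sigma>) \<longleftrightarrow>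
    is_sched n p r d {i. 1 \<le> i \<and> i \<le> k - 1 \<and> r s \<le> r i \<and> r i < Cmax r s \<sigma>} \<sigma> \<and> Cmax r s \<sigma> \<le> d k"
proof -
  let ?r' = "r(k := max (r s) (r k))"
  define J' where "J' = {i. 1 \<le> i \<and> i \<le> k \<and> r s \<le> ?r' i \<and> ?r' i < Cmax r s \<sigma>}"
  have "J' - {k} = {i. 1 \<le> i \<and> i \<le> k - 1 \<and> r s \<le> r i \<and> r i < Cmax r s \<sigma>}"
    by (auto simp: J'_def)
  moreover have "J' \<subseteq> {1..n}" using assms by (auto simp: J'_def)
  ultimately have "is_sched n (p(k := 0)) ?r' d J' \<sigma> \<longleftrightarrow>
      is_sched n p r d {i. 1 \<le> i \<and> i \<le> k - 1 \<and> r s \<le> r i \<and> r i < Cmax r s \<sigma>} \<sigma>"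
    by (intro is_sched_zero_job_iff) auto
  thus ?thesis unfolding skp_sched_iff J'_def by blast
qed

definition P_sched ::
  "nat \<Rightarrow> (nat \<Rightarrow> nat) \<Rightarrow> (nat \<Rightarrow> nat) \<Rightarrow> (nat \<Rightarrow> nat) \<Rightarrow> nat \<Rightarrow> nat \<Rightarrow> nat \<Rightarrow> nat \<Rightarrow> nat \<Rightarrow>
     (nat \<Rightarrow> nat option) \<Rightarrow> bool" where
  "P_sched n p r d s k g l q \<sigma> \<longleftrightarrow> (\<exists>J. skp_sched n p r d s k q J \<sigma>) \<and>
     prevr r (k - 1) (r l) < ereal (real (Cmax r s \<sigma>)) \<and> Cmax r s \<sigma> \<le> r l \<and>
     ngaps \<sigma> (r s) (r l) \<le> g"

lemma P_eq_Inf_P_sched: "P n p r d s k g l = Inf {enat q | q. \<exists>\<sigma>. P_sched n p r d s k g l q \<sigma>}"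
proof -
  have rs: "(r(k := max (r s) (r k))) s = r s" by simp
  have "(\<exists>J \<sigma>. skp_sched n p r d s k q J \<sigma> \<and>
       prevr r (k - 1) (r l) < ereal (real (Cmax (r(k := max (r s) (r k))) s \<sigma>)) \<and>
       Cmax (r(k := max (r s) (r k))) s \<sigma> \<le> r l \<and>
       ngaps \<sigma> ((r(k := max (r s) (r k))) s) (r l) \<le> g) \<longleftrightarrow>
    (\<exists>\<sigma>. P_sched n p r d s k g l q \<sigma>)" for q
    unfolding P_sched_def Cmax_fun_upd_release rs by blast
  thus ?thesis unfolding P_def by simp
qed

lemma enat_Inf_mem: "S \<noteq> {} \<Longrightarrow> Inf S \<in> (S :: enat set)"
  unfolding Inf_enat_def by (auto intro: LeastI)

lemma P_eq_infinity_iff: "P n p r d s k g l = \<infinity> \<longleftrightarrow> (\<nexists>q \<sigma>. P_sched n p r d s k g l q \<sigma>)"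
proof -
  let ?S = "{enat q | q. \<exists>\<sigma>. P_sched n p r d s k g l q \<sigma>}"
  have "Inf ?S = \<infinity> \<longleftrightarrow> ?S = {}"
    using enat_Inf_mem[of ?S] by (cases "?S = {}") (auto simp: top_enat_def)
  thus ?thesis unfolding P_eq_Inf_P_sched by blast
qed

lemma P_eq_0_iff: "P n p r d s k g l = 0 \<longleftrightarrow> (\<exists>\<sigma>. P_sched n p r d s k g l 0 \<sigma>)"
proof -
  let ?S = "{enat q | q. \<exists>\<sigma>. P_sched n p r d s k g l q \<sigma>}"
  have "Inf ?S = 0 \<longleftrightarrow> 0 \<in> ?S"
  proof
    assume "Inf ?S = 0"
    moreover from this have "?S \<noteq> {}" by (intro notI) (simp add: top_enat_def)
    ultimately show "0 \<in> ?S" using enat_Inf_mem by metis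
  qed (use Inf_lower[of 0 ?S] in simp)
  thus ?thesis unfolding P_eq_Inf_P_sched by (simp add: enat_0_iff)
qed

lemma release_le_prevr: "1 \<le> j \<Longrightarrow> j \<le> k' \<Longrightarrow> r j < t \<Longrightarrow> ereal (real (r j)) \<le> prevr r k' t"
  unfolding prevr_def by (rule Sup_upper) blast

lemma prevr_less:
  assumes "\<And>j. 1 \<le> j \<Longrightarrow> j \<le> k' \<Longrightarrow> r j < t \<Longrightarrow> r j < C"
  shows "prevr r k' t < ereal (real C)"
proof -
  have "prevr r k' t \<le> ereal (real C - 1)"
    unfolding prevr_def
  proof (rule Sup_least)
    fix x assume "x \<in> {ereal (real (r j)) |j. 1 \<le> j \<and> j \<le> k' \<and> r j < t}"
    then obtain j where "x = ereal (real (r j))" "r j < C" using assms by blast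
    thus "x \<le> ereal (real C - 1)" by simp
  qed
  thus ?thesis by (simp add: le_less_trans)
qed

lemma release_lt_Cmax_if_P_sched:
  assumes "P_sched n p r d s k g l q \<sigma>" "1 \<le> i" "i < k" "r i < r l"
  shows "r i < Cmax r s \<sigma>"
proof -
  have "ereal (real (r i)) \<le> prevr r (k - 1) (r l)" using assms by (intro release_le_prevr) auto
  also have "\<dots> < ereal (real (Cmax r s \<sigma>))" using assms(1) by (simp add: P_sched_def)
  finally show ?thesis by simp
qed

lemma Cmax_le_U:
  "sk_sched n p r d s k J \<sigma> \<Longrightarrow> ngaps \<sigma> (r s) (Cmax r s \<sigma>) \<le> g \<Longrightarrow>
     ereal (real (Cmax r s \<sigma>)) \<le> U n p r d s k g"
  unfolding U_def by (rule Sup_upper) blast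

lemma ex_sched_if_le_U:
  assumes "ereal (real m) \<le> U n p r d s k g"
  obtains J \<sigma> where "sk_sched n p r d s k J \<sigma>" "ngaps \<sigma> (r s) (Cmax r s \<sigma>) \<le> g" "m \<le> Cmax r s \<sigma>"
proof (rule ccontr)
  assume "\<not> thesis"
  have "U n p r d s k g \<le> ereal (real m - 1)"
    unfolding U_def
  proof (rule Sup_least)
    fix x assume "x \<in> {ereal (real (Cmax r s \<sigma>)) |J \<sigma>.
      sk_sched n p r d s k J \<sigma> \<and> ngaps \<sigma> (r s) (Cmax r s \<sigma>) \<le> g}"
    then obtain J \<sigma> where "x = ereal (real (Cmax r s \<sigma>))" "sk_sched n p r d s k J \<sigma>"
      "ngaps \<sigma> (r s) (Cmax r s \<sigma>) \<le> g" by blast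
    moreover from this have "Cmax r s \<sigma> < m" using that \<open>\<not> thesis\<close> by (meson not_le)
    ultimately show "x \<le> ereal (real m - 1)" by simp
  qed
  with assms have "ereal (real m) \<le> ereal (real m - 1)" by (rule order_trans)
  thus False by simp
qed

lemma ex_fill_interval:
  assumes "B0 \<subseteq> {a..<T}" "a \<le> T" "card B0 + c \<le> T - a"
  obtains \<theta> where "a \<le> \<theta>" "\<theta> \<le> T" "card (B0 \<union> {\<theta>..<T}) = card B0 + c"
proof -
  have fin: "finite B0" by (rule finite_subset[OF assms(1)]) simp
  define f where "f i = - int (card (B0 \<union> {i..<T}))" for i
  have "\<bar>f (Suc i) - f i\<bar> \<le> 1" for i
  proof -
    have "card (B0 \<union> {Suc i..<T}) \<le> card (B0 \<union> {i..<T})" by (rule card_mono) (use fin in auto)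
    moreover have "card (B0 \<union> {i..<T}) \<le> card (insert i (B0 \<union> {Suc i..<T}))"
      by (rule card_mono) (use fin in auto)
    moreover have "card (insert i (B0 \<union> {Suc i..<T})) \<le> Suc (card (B0 \<union> {Suc i..<T}))"
      using fin by (simp add: card_insert_if)
    ultimately show ?thesis by (simp add: f_def)
  qed
  moreover have "f a \<le> - int (card B0 + c)"
  proof -
    have "B0 \<union> {a..<T} = {a..<T}" using assms(1) by blast
    thus ?thesis using assms(2,3) by (simp add: f_def)
  qed
  moreover have "- int (card B0 + c) \<le> f T" by (simp add: f_def)
  ultimately obtain \<theta> where "a \<le> \<theta>" "\<theta> \<le> T" "f \<theta> = - int (card B0 + c)"
    using nat_intermed_int_val[of a T f "- int (card B0 + c)"] assms(2) by auto
  thus thesis using that by (simp add: f_def)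
qed

text \<open>The slots of \<open>\<sigma>\<close> before \<open>T\<close>, topped up by a final segment \<open>[\<theta>, T)\<close> of the idle ones, form a
  set \<open>B\<close> of exactly the right size that still satisfies Hall's condition for the jobs \<open>Q\<close>:
  the work of \<open>Q\<close> that \<open>\<sigma>\<close> carries past \<open>T\<close> fits into the added idle slots.\<close>
lemma ex_fill_satisfying_hall:
  assumes asg: "is_assignment p r d Y \<sigma>" and "finite Y" "Q \<subseteq> Y"
    and early: "\<forall>t i. \<sigma> t = Some i \<longrightarrow> t < T \<longrightarrow> i \<in> Q"
    and released: "\<forall>q\<in>Q. a \<le> r q"
    and hall: "\<And>b. a \<le> b \<Longrightarrow> sum p {q\<in>Q. b \<le> r q} \<le> T - b"
    and "a \<le> T"
  obtains \<theta> where "a \<le> \<theta>" "\<theta> \<le> T"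
    "card ({t. t < T \<and> \<sigma> t \<noteq> None} \<union> {\<theta>..<T}) = sum p Q"
    "\<And>b. sum p {q\<in>Q. b \<le> r q} \<le> card (({t. t < T \<and> \<sigma> t \<noteq> None} \<union> {\<theta>..<T}) \<inter> {b..<T})"
proof -
  define B0 where "B0 = {t. t < T \<and> \<sigma> t \<noteq> None}"
  define Car where "Car = slots_of \<sigma> Q \<inter> {T..}"
  have "finite Q" using assms(2,3) finite_subset by blast
  have B0: "B0 \<subseteq> {a..<T}"
    using early released is_assignmentD[OF asg] by (fastforce simp: B0_def)
  hence "finite B0" by (rule finite_subset) simp
  have "finite Car" using finite_slots_of[OF asg \<open>finite Q\<close>] by (simp add: Car_def)
  have "slots_of \<sigma> Q = B0 \<union> Car" "B0 \<inter> Car = {}"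
    using early by (auto simp: B0_def Car_def slots_of_def)
  hence "sum p Q = card B0 + card Car"
    using card_slots_of[OF asg \<open>finite Q\<close> \<open>Q \<subseteq> Y\<close>] card_Un_disjoint[OF \<open>finite B0\<close> \<open>finite Car\<close>] by simp
  moreover have "sum p Q \<le> T - a" using hall[of a] released by (simp add: Collect_conj_eq Int_absorb2 subset_eq)
  ultimately obtain \<theta> where \<theta>: "a \<le> \<theta>" "\<theta> \<le> T" "card (B0 \<union> {\<theta>..<T}) = card B0 + card Car"
    using ex_fill_interval[OF B0 \<open>a \<le> T\<close>] by metis
  have filled: "card ({\<theta>..<T} - B0) = card Car"
    using \<theta>(3) card_Un_disjoint[OF \<open>finite B0\<close>, of "{\<theta>..<T} - B0"] by simp
  have card_B: "card (B0 \<union> {\<theta>..<T}) = sum p Q" using \<theta>(3) \<open>sum p Q = card B0 + card Car\<close> by simp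
  have hall_B: "sum p {q\<in>Q. b \<le> r q} \<le> card ((B0 \<union> {\<theta>..<T}) \<inter> {b..<T})" for b
  proof (cases "\<theta> \<le> b")
    case True
    hence "(B0 \<union> {\<theta>..<T}) \<inter> {b..<T} = {b..<T}" by auto
    thus ?thesis using hall[of b] True \<theta>(1) by simp
  next
    case False
    define Xb where "Xb = {q\<in>Q. b \<le> r q}"
    have "Xb \<subseteq> Y" "finite Xb" using \<open>Q \<subseteq> Y\<close> \<open>finite Q\<close> by (auto simp: Xb_def)
    have "slots_of \<sigma> Xb \<subseteq> (B0 \<inter> {b..<T}) \<union> Car"
      using is_assignmentD[OF asg] by (fastforce simp: slots_of_def Xb_def B0_def Car_def)
    hence "sum p Xb \<le> card ((B0 \<inter> {b..<T}) \<union> Car)"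
      using card_slots_of[OF asg \<open>finite Xb\<close> \<open>Xb \<subseteq> Y\<close>] \<open>finite B0\<close> \<open>finite Car\<close>
      by (metis card_mono finite_Int finite_UnI)
    also have "\<dots> \<le> card (B0 \<inter> {b..<T}) + card ({\<theta>..<T} - B0)"
      using card_Un_le filled by simp
    also have "\<dots> = card ((B0 \<union> {\<theta>..<T}) \<inter> {b..<T})"
    proof -
      have "(B0 \<union> {\<theta>..<T}) \<inter> {b..<T} = (B0 \<inter> {b..<T}) \<union> ({\<theta>..<T} - B0)" using False by auto
      moreover have "B0 \<inter> {b..<T} \<inter> ({\<theta>..<T} - B0) = {}" by blast
      ultimately show ?thesis
        using card_Un_disjoint[of "B0 \<inter> {b..<T}" "{\<theta>..<T} - B0"] \<open>finite B0\<close> by simp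
    qed
    finally show ?thesis by (simp add: Xb_def)
  qed
  show thesis by (rule that[OF \<theta>(1,2) card_B[unfolded B0_def] hall_B[unfolded B0_def]])
qed

text \<open>Hall's condition on \<open>B\<close> forbids a compact assignment from running anything at or after
  \<open>T\<close>: the work released after the last idle slot of \<open>B\<close> would not fit into the busy slots
  behind it.\<close>
lemma busy_eq_if_hall:
  assumes asg: "is_assignment p r d Q \<pi>" and "finite Q" "finite B" "B \<subseteq> {..<T}"
    and inside: "\<And>t. \<pi> t \<noteq> None \<Longrightarrow> t \<in> B \<or> T \<le> t"
    and compact: "\<And>t u i. t \<in> B \<Longrightarrow> \<pi> u = Some i \<Longrightarrow> r i \<le> t \<Longrightarrow> t < u \<Longrightarrow> \<pi> t \<noteq> None"
    and "card B = sum p Q"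
    and hall: "\<And>b. sum p {q\<in>Q. b \<le> r q} \<le> card (B \<inter> {b..<T})"
  shows "{t. \<pi> t \<noteq> None} = B"
proof -
  have busy: "{t. \<pi> t \<noteq> None} = slots_of \<pi> Q" "card (slots_of \<pi> Q) = card B"
    using busy_eq_slots_of[OF asg] card_slots_of[OF asg \<open>finite Q\<close>] \<open>card B = sum p Q\<close> by auto
  have none_late: "\<pi> w = None" if "T \<le> w" for w
  proof (rule ccontr)
    assume "\<pi> w \<noteq> None"
    define busyB where "busyB = {t \<in> B. \<pi> t \<noteq> None}"
    have "finite busyB" "busyB \<subseteq> B" using \<open>finite B\<close> by (auto simp: busyB_def)
    have "w \<notin> busyB" using \<open>T \<le> w\<close> \<open>B \<subseteq> {..<T}\<close> by (auto simp: busyB_def)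
    have "card (insert w busyB) \<le> card (slots_of \<pi> Q)"
      by (rule card_mono[OF finite_slots_of[OF asg \<open>finite Q\<close>]])
        (use busy(1) \<open>\<pi> w \<noteq> None\<close> in \<open>auto simp: busyB_def\<close>)
    hence "card busyB < card B" using busy(2) \<open>finite busyB\<close> \<open>w \<notin> busyB\<close> by simp
    hence "B - busyB \<noteq> {}" using card_mono[OF \<open>finite busyB\<close>, of B] by auto
    define f where "f = Max (B - busyB)"
    have "f \<in> B - busyB" using Max_in[of "B - busyB"] \<open>B - busyB \<noteq> {}\<close> \<open>finite B\<close> by (simp add: f_def)
    hence f: "f \<in> B" "\<pi> f = None" by (auto simp: busyB_def)
    have after_f: "\<pi> t \<noteq> None" if "t \<in> B" "f < t" for t
    proof
      assume "\<pi> t = None"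
      hence "t \<le> f" using Max_ge[of "B - busyB" t] \<open>finite B\<close> that(1) by (simp add: f_def busyB_def)
      thus False using that(2) by simp
    qed
    define Xb where "Xb = {q\<in>Q. Suc f \<le> r q}"
    have late: "i \<in> Xb" if "\<pi> t = Some i" "f < t" for t i
    proof -
      have "\<not> r i \<le> f" using compact[OF f(1) that(1)] f(2) that(2) by blast
      thus ?thesis using is_assignmentD[OF asg that(1)] by (simp add: Xb_def)
    qed
    have "f < w" using f(1) \<open>B \<subseteq> {..<T}\<close> \<open>T \<le> w\<close> by auto
    have "finite Xb" using \<open>finite Q\<close> by (simp add: Xb_def)
    have "insert w (B \<inter> {Suc f..<T}) \<subseteq> slots_of \<pi> Xb"
    proof
      fix t assume t: "t \<in> insert w (B \<inter> {Suc f..<T})"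
      hence "\<pi> t \<noteq> None" "f < t" using after_f \<open>\<pi> w \<noteq> None\<close> \<open>f < w\<close> by auto
      thus "t \<in> slots_of \<pi> Xb" using late by (auto simp: slots_of_def)
    qed
    hence "card (insert w (B \<inter> {Suc f..<T})) \<le> card (slots_of \<pi> Xb)"
      by (rule card_mono[OF finite_slots_of[OF asg \<open>finite Xb\<close>]])
    moreover have "card (insert w (B \<inter> {Suc f..<T})) = Suc (card (B \<inter> {Suc f..<T}))"
      using \<open>finite B\<close> \<open>T \<le> w\<close> by simp
    moreover have "card (slots_of \<pi> Xb) = sum p Xb"
      using card_slots_of[OF asg \<open>finite Xb\<close>] by (simp add: Xb_def)
    moreover have "sum p Xb \<le> card (B \<inter> {Suc f..<T})" using hall[of "Suc f"] by (simp add: Xb_def)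
    ultimately show False by linarith
  qed
  have "{t. \<pi> t \<noteq> None} \<subseteq> B"
  proof
    fix t assume "t \<in> {t. \<pi> t \<noteq> None}"
    thus "t \<in> B" using inside[of t] none_late[of t] by auto
  qed
  moreover have "card {t. \<pi> t \<noteq> None} = card B" using busy by argo
  ultimately show ?thesis using card_subset_eq[OF \<open>finite B\<close>] by blast
qed

lemma ex_sched_onto_filled_window:
  assumes sch: "is_sched n p r d Y \<sigma>" and "Q \<subseteq> Y"
    and early: "\<forall>t i. \<sigma> t = Some i \<longrightarrow> t < T \<longrightarrow> i \<in> Q"
    and released: "\<forall>q\<in>Q. a \<le> r q"
    and hall: "\<And>b. a \<le> b \<Longrightarrow> sum p {q\<in>Q. b \<le> r q} \<le> T - b"
    and "a \<le> T"
  obtains \<theta> \<pi> where "\<theta> \<le> T" "is_sched n p r d Q \<pi>"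
    "{t. \<pi> t \<noteq> None} = {t. t < T \<and> \<sigma> t \<noteq> None} \<union> {\<theta>..<T}"
proof -
  have asg: "is_assignment p r d Y \<sigma>" using sch by (rule is_sched_imp_is_assignment)
  have "finite Y" using sch by (rule finite_jobs_sched)
  hence "finite Q" using \<open>Q \<subseteq> Y\<close> by (rule finite_subset[rotated])
  obtain \<theta> where \<theta>: "a \<le> \<theta>" "\<theta> \<le> T"
    and card: "card ({t. t < T \<and> \<sigma> t \<noteq> None} \<union> {\<theta>..<T}) = sum p Q"
    and hall_B: "\<And>b. sum p {q\<in>Q. b \<le> r q} \<le> card (({t. t < T \<and> \<sigma> t \<noteq> None} \<union> {\<theta>..<T}) \<inter> {b..<T})"
    using ex_fill_satisfying_hall[OF asg \<open>finite Y\<close> \<open>Q \<subseteq> Y\<close> early released hall \<open>a \<le> T\<close>] by blast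
  define B where "B = {t. t < T \<and> \<sigma> t \<noteq> None} \<union> {\<theta>..<T}"
  have "B \<subseteq> {..<T}" "finite B" by (auto simp: B_def)
  have asgQ: "is_assignment p r d Q (restrict_jobs \<sigma> Q)"
    using is_assignment_restrict_jobs[OF asg \<open>Q \<subseteq> Y\<close>] .
  have "\<forall>t. restrict_jobs \<sigma> Q t \<noteq> None \<longrightarrow> t \<in> B \<union> {T..}"
    by (auto simp: B_def restrict_jobs_def split: option.splits)
  then obtain \<pi> where asg\<pi>: "is_assignment p r d Q \<pi>" and inside: "\<forall>t. \<pi> t \<noteq> None \<longrightarrow> t \<in> B \<union> {T..}"
    and compact: "\<And>t u i. t \<in> B \<union> {T..} \<Longrightarrow> \<pi> u = Some i \<Longrightarrow> r i \<le> t \<Longrightarrow> t < u \<Longrightarrow> \<pi> t \<noteq> None"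
    and edf: "\<And>t u i j. \<pi> t = Some j \<Longrightarrow> \<pi> u = Some i \<Longrightarrow> t < u \<Longrightarrow> r i \<le> t \<Longrightarrow> d j \<le> d i"
    using ex_compact_edf_assignment[OF asgQ \<open>finite Q\<close>] by blast
  have "{t. \<pi> t \<noteq> None} = B"
  proof (rule busy_eq_if_hall[OF asg\<pi> \<open>finite Q\<close> \<open>finite B\<close> \<open>B \<subseteq> {..<T}\<close>])
    show "\<pi> t \<noteq> None \<Longrightarrow> t \<in> B \<or> T \<le> t" for t using inside by auto
    show "t \<in> B \<Longrightarrow> \<pi> u = Some i \<Longrightarrow> r i \<le> t \<Longrightarrow> t < u \<Longrightarrow> \<pi> t \<noteq> None" for t u i
      using compact by blast
  qed (use card hall_B in \<open>simp_all add: B_def\<close>)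
  moreover have "Q \<subseteq> {1..n}" using is_sched_jobs[OF sch] \<open>Q \<subseteq> Y\<close> by blast
  hence "is_sched n p r d Q \<pi>" by (rule is_sched_if_exchange_edf[OF _ asg\<pi>]) (fact edf)
  ultimately show thesis using that \<theta>(2) by (simp add: B_def)
qed

locale job_instance =
  fixes n :: nat and p r d :: "nat \<Rightarrow> nat"
  assumes p_pos: "\<forall>j\<in>{1..n}. 1 \<le> p j"
    and d_mono: "\<forall>i j. 1 \<le> i \<and> i < j \<and> j \<le> n \<longrightarrow> d i < d j"
    and feas: "feasible n p r d"
begin

lemma d_le_d: "1 \<le> i \<Longrightarrow> i \<le> j \<Longrightarrow> j \<le> n \<Longrightarrow> d i \<le> d j"
  using d_mono by (cases "i = j") (auto simp: order_less_imp_le)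

lemma ex_assignment:
  assumes "X \<subseteq> {1..n}"
  shows "\<exists>\<sigma>. is_assignment p r d X \<sigma>"
proof -
  obtain \<sigma> where "is_assignment p r d {1..n} \<sigma>"
    using feas unfolding feasible_def is_assignment_def by blast
  thus ?thesis using is_assignment_restrict_jobs assms by blast
qed

lemma release_lt_deadline:
  assumes "j \<in> {1..n}"
  shows "r j < d j"
proof -
  obtain \<sigma> where asg: "is_assignment p r d {1..n} \<sigma>" using ex_assignment by blast
  moreover obtain t where "\<sigma> t = Some j" using ex_slot[OF asg assms] p_pos assms by fastforce
  ultimately show ?thesis using is_assignmentD by fastforce
qed

lemma ex_slot_sched:
  assumes "is_sched n p r d J \<sigma>" "i \<in> J"
  shows "\<exists>t. \<sigma> t = Some i"
proof -
  have "0 < p i" using p_pos is_sched_jobs[OF assms(1)] assms(2) by force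
  thus ?thesis using ex_slot[OF is_sched_imp_is_assignment[OF assms(1)] assms(2)] by blast
qed

lemma release_lt_Cmax:
  assumes "is_sched n p r d J \<sigma>" "i \<in> J"
  shows "r i < Cmax r s \<sigma>"
proof -
  obtain t where "\<sigma> t = Some i" using ex_slot_sched assms by blast
  thus ?thesis
    using is_assignmentD[OF is_sched_imp_is_assignment[OF assms(1)]] Suc_le_Cmax[of \<sigma> t r s]
      finite_busy_sched[OF assms(1)] by fastforce
qed

lemma Cedf_le_Cmax_sk_sched:
  assumes sk: "sk_sched n p r d s j J \<sigma>" and "j \<in> J"
  shows "Cedf n p r d s j \<le> enat (Cmax r s \<sigma>)"
proof -
  have sch: "is_sched n p r d J \<sigma>" using sk unfolding sk_sched_def by blast
  have fin: "finite {t. \<sigma> t = Some j}"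
    using finite_job_slots[OF is_sched_imp_is_assignment[OF sch]] .
  have "{t. \<sigma> t = Some j} \<noteq> {}" using ex_slot_sched[OF sch \<open>j \<in> J\<close>] by blast
  hence "\<sigma> (Max {t. \<sigma> t = Some j}) = Some j" using Max_in[OF fin] by blast
  hence "Suc (Max {t. \<sigma> t = Some j}) \<le> Cmax r s \<sigma>"
    using Suc_le_Cmax[OF finite_busy_sched[OF sch]] by simp
  moreover have "Cedf n p r d s j \<le> enat (Suc (Max {t. \<sigma> t = Some j}))"
    unfolding Cedf_def by (rule Inf_lower) (use sk \<open>j \<in> J\<close> in blast)
  ultimately show ?thesis by (meson enat_ord_simps(1) order_trans)
qed

text \<open>Restricting a \<open>(s,k,q)\<close>-schedule to the jobs up to \<open>j < k\<close> gives an \<open>(s,j)\<close>-schedule.\<close>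
lemma Cedf_le_Cmax:
  assumes sk: "skp_sched n p r d s k q J \<sigma>"
    and j: "1 \<le> j" "j < k" "k \<le> n" "r s \<le> r j" "r j < Cmax r s \<sigma>"
  shows "Cedf n p r d s j \<le> enat (Cmax r s \<sigma>)"
proof -
  let ?r' = "r(k := max (r s) (r k))"
  have sch: "is_sched n (p(k := q)) ?r' d J \<sigma>"
    and J: "J = {i. 1 \<le> i \<and> i \<le> k \<and> r s \<le> ?r' i \<and> ?r' i < Cmax r s \<sigma>}"
    using sk unfolding skp_sched_iff by blast+
  define X where "X = {i \<in> J. i \<le> j}"
  have X: "i \<in> X \<longleftrightarrow> 1 \<le> i \<and> i \<le> j \<and> r s \<le> r i \<and> r i < Cmax r s \<sigma>" for i
    using j unfolding X_def J by auto
  define \<sigma>j where "\<sigma>j = restrict_jobs \<sigma> X"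
  have \<sigma>j: "\<sigma>j t = Some i \<longleftrightarrow> \<sigma> t = Some i \<and> i \<in> X" for t i
    by (simp add: \<sigma>j_def restrict_jobs_eq_Some)
  have schX: "is_sched n p r d X \<sigma>j"
  proof (rule is_sched_cong)
    show "is_sched n (p(k := q)) ?r' d X \<sigma>j"
      unfolding \<sigma>j_def by (rule is_sched_restrict_jobs[OF sch]) (simp add: X_def)
    show "i \<in> X \<Longrightarrow> (p(k := q)) i = p i \<and> ?r' i = r i" for i using X j(2) by auto
  qed
  have "Cmax r s \<sigma>j \<le> Cmax r s \<sigma>"
  proof (rule Cmax_le[OF Cmax_ge_release])
    fix t assume "\<sigma>j t \<noteq> None"
    hence "\<sigma> t \<noteq> None" using \<sigma>j by (metis option.exhaust)
    thus "Suc t \<le> Cmax r s \<sigma>" by (rule Suc_le_Cmax[OF finite_busy_sched[OF sch]])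
  qed
  moreover have "Cmax r s \<sigma>j \<le> d j"
  proof (rule Cmax_le)
    show "r s \<le> d j" using j release_lt_deadline[of j] by simp
  next
    fix t assume "\<sigma>j t \<noteq> None"
    then obtain i where "\<sigma>j t = Some i" by blast
    hence "t < d i" "1 \<le> i" "i \<le> j"
      using is_assignmentD[OF is_sched_imp_is_assignment[OF schX]] X by blast+
    thus "Suc t \<le> d j" using d_le_d[of i j] j by simp
  qed
  moreover have "X = {i. 1 \<le> i \<and> i \<le> j \<and> r s \<le> r i \<and> r i < Cmax r s \<sigma>j}"
    using release_lt_Cmax[OF schX] calculation(1) X by fastforce
  moreover have "j \<in> X" using X j by simp
  ultimately have "sk_sched n p r d s j X \<sigma>j" "j \<in> X"
    using schX unfolding sk_sched_def by blast+
  from Cedf_le_Cmax_sk_sched[OF this] \<open>Cmax r s \<sigma>j \<le> Cmax r s \<sigma>\<close> show ?thesis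
    by (meson enat_ord_simps(1) order_trans)
qed

lemma Cedf_le_if_P_sched:
  assumes "P_sched n p r d s k g l q \<sigma>" "1 \<le> j" "j < k" "k \<le> n" "r s \<le> r j" "r j < r l"
  shows "Cedf n p r d s j \<le> enat (r l)"
proof -
  obtain J where "skp_sched n p r d s k q J \<sigma>" using assms(1) by (auto simp: P_sched_def)
  hence "Cedf n p r d s j \<le> enat (Cmax r s \<sigma>)"
    using Cedf_le_Cmax release_lt_Cmax_if_P_sched[OF assms(1)] assms(2-6) by simp
  moreover have "Cmax r s \<sigma> \<le> r l" using assms(1) by (simp add: P_sched_def)
  ultimately show ?thesis by (meson enat_ord_simps(1) order_trans)
qed

text \<open>In an \<open>(s,j)\<close>-schedule no job \<open>q < j\<close> released before the last slot of \<open>j\<close> can still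
  run after it, since it would have had priority over \<open>j\<close> there.\<close>
lemma sum_p_released_before_Cedf:
  assumes "Cedf n p r d s j \<le> enat c" "r s \<le> a"
  obtains c' where "c' \<le> c" "r j < c'" "sum p {q. 1 \<le> q \<and> q \<le> j \<and> a \<le> r q \<and> r q < c'} \<le> c' - a"
proof -
  let ?S = "{enat (Suc (Max {t. \<sigma> t = Some j})) | J \<sigma>. sk_sched n p r d s j J \<sigma> \<and> j \<in> J}"
  have "?S \<noteq> {}" using assms(1) by (intro notI) (simp add: Cedf_def top_enat_def)
  hence "Cedf n p r d s j \<in> ?S" unfolding Cedf_def by (rule enat_Inf_mem)
  then obtain J \<rho> where sk: "sk_sched n p r d s j J \<rho>" "j \<in> J"
    and "Cedf n p r d s j = enat (Suc (Max {t. \<rho> t = Some j}))" by blast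
  hence le: "Suc (Max {t. \<rho> t = Some j}) \<le> c" using assms(1) by simp
  define c' where "c' = Suc (Max {t. \<rho> t = Some j})"
  have sch: "is_sched n p r d J \<rho>" and J: "J = {i. 1 \<le> i \<and> i \<le> j \<and> r s \<le> r i \<and> r i < Cmax r s \<rho>}"
    using sk unfolding sk_sched_def by blast+
  have asg: "is_assignment p r d J \<rho>" using sch by (rule is_sched_imp_is_assignment)
  have fin: "finite {t. \<rho> t = Some j}" using finite_job_slots[OF asg] .
  have "{t. \<rho> t = Some j} \<noteq> {}" using ex_slot_sched[OF sch sk(2)] by blast
  hence last: "\<rho> (c' - 1) = Some j" using Max_in[OF fin] by (simp add: c'_def)
  have "r j < c'" using is_assignmentD[OF asg last] by (simp add: c'_def)
  have "c' \<le> Cmax r s \<rho>" using Suc_le_Cmax[OF finite_busy_sched[OF sch], of "c' - 1"] last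
    by (simp add: c'_def)
  define Y where "Y = {q. 1 \<le> q \<and> q \<le> j \<and> a \<le> r q \<and> r q < c'}"
  have "Y \<subseteq> J" using \<open>c' \<le> Cmax r s \<rho>\<close> assms(2) by (auto simp: Y_def J)
  have "slots_of \<rho> Y \<subseteq> {a..<c'}"
  proof
    fix t assume "t \<in> slots_of \<rho> Y"
    then obtain q where q: "q \<in> Y" "\<rho> t = Some q" by (auto simp: slots_of_def)
    have "t < c'"
    proof (rule ccontr)
      assume "\<not> t < c'"
      hence "c' - 1 < t" by (simp add: c'_def)
      have "q \<noteq> j"
      proof
        assume "q = j"
        hence "t \<le> Max {t. \<rho> t = Some j}" using Max_ge[OF fin] q(2) by simp
        thus False using \<open>\<not> t < c'\<close> by (simp add: c'_def)
      qed
      have "t \<in> {u. \<rho> u = Some q}" "t \<notin> {u. u < c' - 1 \<and> \<rho> u = Some q}"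
        using q(2) \<open>c' - 1 < t\<close> by simp_all
      hence "{u. u < c' - 1 \<and> \<rho> u = Some q} \<subset> {u. \<rho> u = Some q}" by blast
      hence "card {u. u < c' - 1 \<and> \<rho> u = Some q} < card {u. \<rho> u = Some q}"
        by (rule psubset_card_mono[OF finite_job_slots[OF asg]])
      hence "card {u. u < c' - 1 \<and> \<rho> u = Some q} < p q"
        using is_assignment_card[OF asg] q(1) \<open>Y \<subseteq> J\<close> by auto
      hence "d j \<le> d q" using is_sched_edf[OF sch last] q(1) \<open>Y \<subseteq> J\<close> by (auto simp: Y_def)
      moreover have "d q < d j"
      proof -
        have "j \<le> n" using is_sched_jobs[OF sch] sk(2) by auto
        thus ?thesis using d_mono[rule_format, of q j] q(1) \<open>q \<noteq> j\<close> by (simp add: Y_def)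
      qed
      ultimately show False by simp
    qed
    thus "t \<in> {a..<c'}" using is_assignmentD[OF asg q(2)] q(1) by (simp add: Y_def)
  qed
  hence "sum p Y \<le> c' - a"
    using card_slots_of[OF asg _ \<open>Y \<subseteq> J\<close>] card_mono[of "{a..<c'}" "slots_of \<rho> Y"] by (simp add: Y_def)
  thus thesis using that le \<open>r j < c'\<close> by (simp add: Y_def c'_def)
qed

text \<open>Hall's condition for the jobs released in \<open>[r\<^sub>s, T)\<close>, by induction on \<open>T - a\<close>: the last
  job released in \<open>[a, T)\<close> completes at some \<open>c \<le> T\<close>, and the work released in \<open>[a, c)\<close> fits
  into \<open>[a, c)\<close>.\<close>
lemma sum_p_released_le:
  assumes Cedf: "\<forall>j. 1 \<le> j \<and> j < k \<and> r s \<le> r j \<and> r j < T \<longrightarrow> Cedf n p r d s j \<le> enat T"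
    and "r s \<le> a"
  shows "sum p {q. 1 \<le> q \<and> q < k \<and> a \<le> r q \<and> r q < T} \<le> T - a"
  using \<open>r s \<le> a\<close>
proof (induction "T - a" arbitrary: a rule: less_induct)
  case less
  define X where "X = {q. 1 \<le> q \<and> q < k \<and> a \<le> r q \<and> r q < T}"
  have "finite X" by (rule finite_subset[of _ "{..<k}"]) (auto simp: X_def)
  show ?case
  proof (cases "X = {}")
    case False
    define j where "j = Max X"
    have "j \<in> X" using Max_in[OF \<open>finite X\<close> False] by (simp add: j_def)
    hence "Cedf n p r d s j \<le> enat T" using Cedf less.prems by (auto simp: X_def)
    then obtain c' where c': "c' \<le> T" "r j < c'"
      and Y: "sum p {q. 1 \<le> q \<and> q \<le> j \<and> a \<le> r q \<and> r q < c'} \<le> c' - a"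
      using sum_p_released_before_Cedf less.prems by blast
    have "a < c'" using \<open>j \<in> X\<close> c' by (simp add: X_def)
    define Y where "Y = {q. 1 \<le> q \<and> q \<le> j \<and> a \<le> r q \<and> r q < c'}"
    define Z where "Z = {q. 1 \<le> q \<and> q < k \<and> c' \<le> r q \<and> r q < T}"
    have "sum p Z \<le> T - c'"
    proof -
      have "a < T" using \<open>j \<in> X\<close> by (simp add: X_def)
      hence "T - c' < T - a" using \<open>a < c'\<close> by linarith
      thus ?thesis using less.hyps[of c'] less.prems \<open>a < c'\<close> by (simp add: Z_def)
    qed
    have "finite Y" "finite Z" by (auto intro: finite_subset[of _ "{..k}"] simp: Y_def Z_def)
    have "X \<subseteq> Y \<union> Z" using Max_ge[OF \<open>finite X\<close>] by (force simp: X_def Y_def Z_def j_def)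
    hence "sum p X \<le> sum p (Y \<union> Z)" using \<open>finite Y\<close> \<open>finite Z\<close> by (intro sum_mono2) auto
    also have "\<dots> \<le> sum p Y + sum p Z" using sum_Un_nat[OF \<open>finite Y\<close> \<open>finite Z\<close>, of p] by linarith
    finally show ?thesis using Y \<open>sum p Z \<le> T - c'\<close> c' \<open>a < c'\<close> by (simp add: X_def Y_def)
  next
    case True
    hence "sum p X = 0" by simp
    thus ?thesis by (simp add: X_def)
  qed
qed

lemma ex_busy_block:
  assumes "X \<subseteq> {1..n}" "j \<in> X" "\<forall>i\<in>X. r j \<le> r i"
  obtains C \<psi> where "r j < C" "is_sched n p r d {i \<in> X. r i < C} \<psi>"
    "\<And>t. \<psi> t \<noteq> None \<longleftrightarrow> r j \<le> t \<and> t < C"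
proof -
  have "finite X" using assms(1) by (rule finite_subset) simp
  obtain \<sigma> where asg\<sigma>: "is_assignment p r d X \<sigma>" using ex_assignment assms(1) by blast
  have "\<forall>t. \<sigma> t \<noteq> None \<longrightarrow> t \<in> UNIV" by simp
  then obtain \<pi> where asg: "is_assignment p r d X \<pi>" and "\<forall>t. \<pi> t \<noteq> None \<longrightarrow> t \<in> UNIV"
    and compact: "\<And>t u i. t \<in> UNIV \<Longrightarrow> \<pi> u = Some i \<Longrightarrow> r i \<le> t \<Longrightarrow> t < u \<Longrightarrow> \<pi> t \<noteq> None"
    and edf: "\<And>t u i j. \<pi> t = Some j \<Longrightarrow> \<pi> u = Some i \<Longrightarrow> t < u \<Longrightarrow> r i \<le> t \<Longrightarrow> d j \<le> d i"
    by (rule ex_compact_edf_assignment[OF asg\<sigma> \<open>finite X\<close>]) (rule that)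
  have sch: "is_sched n p r d X \<pi>" by (rule is_sched_if_exchange_edf[OF assms(1) asg]) (fact edf)
  have "finite {t. \<pi> t \<noteq> None}" using finite_busy[OF asg \<open>finite X\<close>] .
  hence "\<exists>t. r j \<le> t \<and> \<pi> t = None"
  proof -
    define M where "M = Max (insert (r j) {t. \<pi> t \<noteq> None})"
    have "r j \<le> M" and bound: "\<And>t. \<pi> t \<noteq> None \<Longrightarrow> t \<le> M"
      using Max_ge \<open>finite {t. \<pi> t \<noteq> None}\<close> by (auto simp: M_def)
    moreover have "\<pi> (Suc M) = None" using bound[of "Suc M"] by fastforce
    ultimately show ?thesis using le_SucI by blast
  qed
  define C where "C = (LEAST t. r j \<le> t \<and> \<pi> t = None)"
  have C: "r j \<le> C" "\<pi> C = None" using LeastI_ex[OF \<open>\<exists>t. r j \<le> t \<and> \<pi> t = None\<close>] by (simp_all add: C_def)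
  have busy_before_C: "\<pi> t \<noteq> None" if "r j \<le> t" "t < C" for t
    using not_less_Least[of t "\<lambda>t. r j \<le> t \<and> \<pi> t = None"] that by (auto simp: C_def)
  obtain u where u: "\<pi> u = Some j" using ex_slot_sched[OF sch assms(2)] by blast
  have "\<pi> (r j) \<noteq> None"
    using compact[OF UNIV_I u, of "r j"] u is_assignmentD[OF asg u] by (cases "u = r j") auto
  hence "r j < C" using C by (metis le_neq_implies_less)
  have before_C: "u < C" if "\<pi> u = Some i" "r i < C" for u i
  proof (rule ccontr)
    assume "\<not> u < C"
    hence "C < u" using C(2) that(1) by (cases "u = C") auto
    thus False using compact[OF UNIV_I that(1), of C] C(2) that(2) by simp
  qed
  define \<psi> where "\<psi> = restrict_jobs \<pi> {i \<in> X. r i < C}"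
  have "is_sched n p r d {i \<in> X. r i < C} \<psi>" unfolding \<psi>_def by (rule is_sched_restrict_jobs[OF sch]) auto
  moreover have "\<psi> t \<noteq> None \<longleftrightarrow> r j \<le> t \<and> t < C" for t
  proof
    assume "\<psi> t \<noteq> None"
    then obtain i where "\<pi> t = Some i" "i \<in> X" "r i < C" by (auto simp: \<psi>_def restrict_jobs_def split: option.splits if_splits)
    thus "r j \<le> t \<and> t < C" using before_C assms(3) is_assignmentD[OF asg] by fastforce
  next
    assume rt: "r j \<le> t \<and> t < C"
    then obtain i where i: "\<pi> t = Some i" using busy_before_C by blast
    hence "i \<in> X" "r i < C" using is_assignmentD[OF asg i] rt by auto
    thus "\<psi> t \<noteq> None" using i by (simp add: \<psi>_def restrict_jobs_def)
  qed
  ultimately show thesis using that \<open>r j < C\<close> by blast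
qed

text \<open>An \<open>(s,k,0)\<close>-schedule ending before \<open>r\<^sub>l\<close> extends, by the busy block of the later jobs
  starting at \<open>r\<^sub>l\<close>, to an \<open>(s,k-1)\<close>-schedule ending after \<open>r\<^sub>l\<close> without new gaps.\<close>
lemma release_le_U_if_P_sched:
  assumes P: "P_sched n p r d s k g l 0 \<sigma>" and "k \<le> n" "1 \<le> l" "l < k" "r s \<le> r l"
  shows "ereal (real (r l)) \<le> U n p r d s (k - 1) g"
proof -
  define J0 where "J0 = {i. 1 \<le> i \<and> i \<le> k - 1 \<and> r s \<le> r i \<and> r i < Cmax r s \<sigma>}"
  have "\<exists>J. skp_sched n p r d s k 0 J \<sigma>" and "Cmax r s \<sigma> \<le> r l"
    using P by (simp_all add: P_sched_def)
  hence sch0: "is_sched n p r d J0 \<sigma>"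
    unfolding J0_def skp_sched_zero_iff[OF \<open>k \<le> n\<close>] by blast
  define X where "X = {i. 1 \<le> i \<and> i \<le> k - 1 \<and> r l \<le> r i}"
  have "X \<subseteq> {1..n}" "l \<in> X" "\<forall>i\<in>X. r l \<le> r i" using assms(2-4) by (auto simp: X_def)
  then obtain C \<psi> where "r l < C" and sch\<psi>: "is_sched n p r d {i \<in> X. r i < C} \<psi>"
    and \<psi>: "\<And>t. \<psi> t \<noteq> None \<longleftrightarrow> r l \<le> t \<and> t < C"
    by (rule ex_busy_block) (rule that)
  define \<rho> where "\<rho> = (\<lambda>t. if t < r l then \<sigma> t else \<psi> t)"
  have "is_sched n p r d (J0 \<union> {i \<in> X. r i < C}) \<rho>"
    unfolding \<rho>_def
  proof (rule is_sched_splice[OF sch0 sch\<psi>])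
    show "\<sigma> t \<noteq> None \<Longrightarrow> t < r l" for t
      using Suc_le_Cmax[OF finite_busy_sched[OF sch0], of t r s] \<open>Cmax r s \<sigma> \<le> r l\<close> by simp
  qed (use \<open>Cmax r s \<sigma> \<le> r l\<close> in \<open>auto simp: J0_def X_def\<close>)
  moreover have "J0 \<union> {i \<in> X. r i < C} = {i. 1 \<le> i \<and> i \<le> k - 1 \<and> r s \<le> r i \<and> r i < C}"
    using release_lt_Cmax_if_P_sched[OF P] \<open>Cmax r s \<sigma> \<le> r l\<close> \<open>r l < C\<close> assms(5)
    by (fastforce simp: J0_def X_def)
  moreover have busy: "\<rho> t \<noteq> None \<longleftrightarrow> (if t < r l then \<sigma> t \<noteq> None else t < C)" for t
    using \<psi> by (simp add: \<rho>_def)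
  moreover from this have "Cmax r s \<rho> = C"
    using finite_busy_sched[OF calculation(1)] \<open>r l < C\<close> assms(5)
    by (intro Cmax_eqI) (auto split: if_splits)
  moreover have "C \<le> d (k - 1)"
  proof -
    obtain i where "\<psi> (C - 1) = Some i" using \<psi>[of "C - 1"] \<open>r l < C\<close> by fastforce
    hence "C - 1 < d i" "i \<in> X" using is_assignmentD[OF is_sched_imp_is_assignment[OF sch\<psi>]] by auto
    moreover from this have "d i \<le> d (k - 1)" using d_le_d[of i "k - 1"] assms(2) by (simp add: X_def)
    ultimately show ?thesis using \<open>r l < C\<close> by linarith
  qed
  moreover have "ngaps \<rho> (r s) C \<le> ngaps \<sigma> (r s) (r l)"
  proof (rule ngaps_le_if_agree_then_busy)
    show "\<rho> t = None \<longleftrightarrow> \<sigma> t = None" if "t < r l" for t using that by (simp add: \<rho>_def)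
    show "\<rho> t \<noteq> None" if "r l \<le> t" "t < C" for t using that \<psi> by (simp add: \<rho>_def)
  qed simp
  hence "ngaps \<rho> (r s) C \<le> g" using P by (simp add: P_sched_def)
  ultimately have "ereal (real C) \<le> U n p r d s (k - 1) g"
    using Cmax_le_U[of n p r d s "k - 1" _ \<rho> g] by (simp add: sk_sched_def)
  moreover have "ereal (real (r l)) \<le> ereal (real C)" using \<open>r l < C\<close> by simp
  ultimately show ?thesis by (rule order_trans[rotated])
qed

lemma ex_P_sched_zero:
  assumes Cedf: "\<forall>j. 1 \<le> j \<and> j < k \<and> r s \<le> r j \<and> r j < r l \<longrightarrow> Cedf n p r d s j \<le> enat (r l)"
    and U: "ereal (real (r l)) \<le> U n p r d s (k - 1) g"
    and "k \<le> n" "1 \<le> l" "l < k" "r s \<le> r l"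
  shows "\<exists>\<pi>. P_sched n p r d s k g l 0 \<pi>"
proof -
  obtain J\<sigma> \<sigma> where sk: "sk_sched n p r d s (k - 1) J\<sigma> \<sigma>"
    and gaps: "ngaps \<sigma> (r s) (Cmax r s \<sigma>) \<le> g" and "r l \<le> Cmax r s \<sigma>"
    using ex_sched_if_le_U[OF U] by blast
  have sch\<sigma>: "is_sched n p r d J\<sigma> \<sigma>"
    and J\<sigma>: "J\<sigma> = {i. 1 \<le> i \<and> i \<le> k - 1 \<and> r s \<le> r i \<and> r i < Cmax r s \<sigma>}"
    using sk unfolding sk_sched_def by blast+
  define Q where "Q = {q. 1 \<le> q \<and> q < k \<and> r s \<le> r q \<and> r q < r l}"
  have "Q \<subseteq> J\<sigma>" using \<open>r l \<le> Cmax r s \<sigma>\<close> by (auto simp: Q_def J\<sigma>)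
  have early: "\<forall>t i. \<sigma> t = Some i \<longrightarrow> t < r l \<longrightarrow> i \<in> Q"
  proof (intro allI impI)
    fix t i assume "\<sigma> t = Some i" "t < r l"
    moreover from this have "i \<in> J\<sigma>" "r i \<le> t"
      using is_assignmentD[OF is_sched_imp_is_assignment[OF sch\<sigma>]] by auto
    ultimately show "i \<in> Q" unfolding Q_def J\<sigma> by auto
  qed
  have hall: "sum p {q\<in>Q. b \<le> r q} \<le> r l - b" if "r s \<le> b" for b
  proof -
    have "{q\<in>Q. b \<le> r q} = {q. 1 \<le> q \<and> q < k \<and> b \<le> r q \<and> r q < r l}"
      using that by (auto simp: Q_def)
    thus ?thesis using sum_p_released_le[OF Cedf that] by simp
  qed
  have released: "\<forall>q\<in>Q. r s \<le> r q" by (simp add: Q_def)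
  obtain \<theta> \<pi> where "\<theta> \<le> r l" and sch: "is_sched n p r d Q \<pi>"
    and busy: "{t. \<pi> t \<noteq> None} = {t. t < r l \<and> \<sigma> t \<noteq> None} \<union> {\<theta>..<r l}"
    using ex_sched_onto_filled_window[OF sch\<sigma> \<open>Q \<subseteq> J\<sigma>\<close> early released hall \<open>r s \<le> r l\<close>] by blast
  have "Cmax r s \<pi> \<le> r l"
    using busy \<open>r s \<le> r l\<close> by (intro Cmax_le) (auto simp: Suc_le_eq)
  hence "Q = {i. 1 \<le> i \<and> i \<le> k - 1 \<and> r s \<le> r i \<and> r i < Cmax r s \<pi>}"
    using release_lt_Cmax[OF sch] by (force simp: Q_def)
  moreover have "Cmax r s \<pi> \<le> d k"
    using \<open>Cmax r s \<pi> \<le> r l\<close> release_lt_deadline[of l] d_le_d[of l k] assms(3-5) by simp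
  ultimately have "\<exists>J. skp_sched n p r d s k 0 J \<pi>" using skp_sched_zero_iff[OF \<open>k \<le> n\<close>] sch by simp
  moreover have "prevr r (k - 1) (r l) < ereal (real (Cmax r s \<pi>))"
  proof (rule prevr_less)
    fix j assume "1 \<le> j" "j \<le> k - 1" "r j < r l"
    thus "r j < Cmax r s \<pi>"
      using release_lt_Cmax[OF sch, of j s] Cmax_ge_release[of r s \<pi>] assms(5)
      by (cases "r s \<le> r j") (auto simp: Q_def)
  qed
  moreover have "ngaps \<pi> (r s) (r l) \<le> ngaps \<sigma> (r s) (Cmax r s \<sigma>)"
  proof (rule ngaps_le_if_agree_then_busy)
    have busy_iff: "\<pi> t \<noteq> None \<longleftrightarrow> t < r l \<and> \<sigma> t \<noteq> None \<or> \<theta> \<le> t \<and> t < r l" for t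
      using busy[unfolded set_eq_iff, rule_format, of t] by simp
    show "\<pi> t = None \<longleftrightarrow> \<sigma> t = None" if "t < \<theta>" for t
      using busy_iff[of t] \<open>\<theta> \<le> r l\<close> that by auto
    show "\<pi> t \<noteq> None" if "\<theta> \<le> t" "t < r l" for t
      using busy_iff[of t] that by auto
  qed (use \<open>r l \<le> Cmax r s \<sigma>\<close> in simp)
  hence "ngaps \<pi> (r s) (r l) \<le> g" using gaps by simp
  ultimately have "P_sched n p r d s k g l 0 \<pi>" using \<open>Cmax r s \<pi> \<le> r l\<close> by (simp add: P_sched_def)
  thus ?thesis by (rule exI[where x = \<pi>])
qed

end

theorem lemma9:
  fixes n s k g l :: nat and p r d :: "nat \<Rightarrow> nat"
  assumes p_pos: "\<forall>j\<in>{1..n}. 1 \<le> p j"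
    and d_mono: "\<forall>i j. 1 \<le> i \<and> i < j \<and> j \<le> n \<longrightarrow> d i < d j"
    and r_dist: "inj_on r {1..n}"
    and feas: "feasible n p r d"
    and s: "1 \<le> s" "s \<le> n"
    and k: "1 \<le> k" "k \<le> n"
    and l: "1 \<le> l" "l \<le> k - 1"
    and rl: "r s \<le> r l"
    and g: "g \<le> n - 1"
  shows "((\<exists>j. 1 \<le> j \<and> j < k \<and> r s \<le> r j \<and> r j < r l \<and> Cedf n p r d s j > enat (r l))
            \<longrightarrow> P n p r d s k g l = \<infinity>) \<and>
         (P n p r d s k g l = 0 \<longleftrightarrow>
            (U n p r d s (k - 1) g \<ge> ereal (real (r l)) \<and>
             (\<forall>j. 1 \<le> j \<and> j < k \<and> r s \<le> r j \<and> r j < r l \<longrightarrow> Cedf n p r d s j \<le> enat (r l))))"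
proof -
  interpret job_instance n p r d using p_pos d_mono feas by unfold_locales
  have "l < k" using l by simp
  have Cedf: "Cedf n p r d s j \<le> enat (r l)"
    if "P_sched n p r d s k g l q \<sigma>" "1 \<le> j" "j < k" "r s \<le> r j" "r j < r l" for q \<sigma> j
    using Cedf_le_if_P_sched[OF that(1,2,3) k(2) that(4,5)] .
  have "P n p r d s k g l = \<infinity>"
    if "\<exists>j. 1 \<le> j \<and> j < k \<and> r s \<le> r j \<and> r j < r l \<and> Cedf n p r d s j > enat (r l)"
    using that Cedf unfolding P_eq_infinity_iff by (meson not_le)
  moreover have "ereal (real (r l)) \<le> U n p r d s (k - 1) g" if "P n p r d s k g l = 0"
    using that release_le_U_if_P_sched[OF _ k(2) l(1) \<open>l < k\<close> rl] unfolding P_eq_0_iff by blast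
  moreover have "P n p r d s k g l = 0"
    if "ereal (real (r l)) \<le> U n p r d s (k - 1) g"
      "\<forall>j. 1 \<le> j \<and> j < k \<and> r s \<le> r j \<and> r j < r l \<longrightarrow> Cedf n p r d s j \<le> enat (r l)"
    using ex_P_sched_zero[OF that(2,1) k(2) l(1) \<open>l < k\<close> rl] unfolding P_eq_0_iff .
  ultimately show ?thesis using Cedf unfolding P_eq_0_iff by blast
qed

end
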